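(* For every hexagon $X$ of the dappled triangular grid $\mathbf{T}$, the hued graph $X^{-}$ is a retract of the hued graph $\mathbf{T}^{-}$.
   Context: A hued graph is a graph with a proper coloring $\psi:V\to\mathbb{Z}_3$ (hue); a dappled graph is a hued graph with additionally a proper coloring $\varphi:V\to\mathbb{Z}_2^2$ (color). For a dappled graph $G$, $G^{-}$ is the hued graph obtained by forgetting the colors. The dappled triangular grid $\mathbf{T}$ has vertex set $\mathbb{Z}^2$, with $(i_1,j_1)$ and $(i_2,j_2)$ adjacent iff $(i_2-i_1,j_2-j_1)\in\{\pm(1,0),\pm(0,1),\pm(1,1)\}$, hue $(i+j)\bmod 3$ and color $(i\bmod 2,j\bmod 2)$ at $(i,j)$. A hexagon is the dappled subgraph of $\mathbf{T}$ induced by a vertex and its neighbors. A homomorphism of hued graphs maps adjacent vertices to adjacent vertices and preserves hue. A retract of a hued graph $G$ is an induced subgraph $H$ of $G$ for which there exists a retraction, i.e. a homomorphism of hued graphs $f:V(G)\to V(H)$ with $f(v)=v$ for all $v\in V(H)$. *)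

theory Defs
  imports Main
begin

text \<open>Hued graphs are given by a vertex set V, a symmetric adjacency relation E
  and a hue function into Z_3 (represented by int values taken mod 3).\<close>

definition hued_hom ::
  "'a set \<Rightarrow> ('a \<Rightarrow> 'a \<Rightarrow> bool) \<Rightarrow> ('a \<Rightarrow> int) \<Rightarrow>
   'b set \<Rightarrow> ('b \<Rightarrow> 'b \<Rightarrow> bool) \<Rightarrow> ('b \<Rightarrow> int) \<Rightarrow> ('a \<Rightarrow> 'b) \<Rightarrow> bool" where
  "hued_hom V E h W F k f \<longleftrightarrow>
     (\<forall>v\<in>V. f v \<in> W) \<and>
     (\<forall>u\<in>V. \<forall>v\<in>V. E u v \<longrightarrow> F (f u) (f v)) \<and>
     (\<forall>v\<in>V. k (f v) mod 3 = h v mod 3)"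

definition induced :: "'a set \<Rightarrow> ('a \<Rightarrow> 'a \<Rightarrow> bool) \<Rightarrow> 'a \<Rightarrow> 'a \<Rightarrow> bool" where
  "induced W E u v \<longleftrightarrow> u \<in> W \<and> v \<in> W \<and> E u v"

definition hued_retract ::
  "'a set \<Rightarrow> ('a \<Rightarrow> 'a \<Rightarrow> bool) \<Rightarrow> ('a \<Rightarrow> int) \<Rightarrow> 'a set \<Rightarrow> bool" where
  "hued_retract V E h W \<longleftrightarrow> W \<subseteq> V \<and>
     (\<exists>f. hued_hom V E h W (induced W E) h f \<and> (\<forall>v\<in>W. f v = v))"

definition T_adj :: "int \<times> int \<Rightarrow> int \<times> int \<Rightarrow> bool" where
  "T_adj p q \<longleftrightarrow> (fst q - fst p, snd q - snd p) \<in>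
     {(1,0), (-1,0), (0,1), (0,-1), (1,1), (-1,-1)}"

definition T_hue :: "int \<times> int \<Rightarrow> int" where
  "T_hue p = (fst p + snd p) mod 3"

definition T_color :: "int \<times> int \<Rightarrow> int \<times> int" where
  "T_color p = (fst p mod 2, snd p mod 2)"

definition hexagon :: "int \<times> int \<Rightarrow> (int \<times> int) set" where
  "hexagon c = insert c {v. T_adj c v}"

end

theory Submission
  imports Defs "HOL-Library.Product_Plus"
begin

text \<open>Translations of the grid are graph automorphisms shifting every hue by the same
  constant, so conjugating a retraction by a translation gives a retraction again; hence it
  suffices to treat the hexagon centred at the origin. Since the hue is a proper 3-colouring,
  sending every vertex to the vertex of its hue in the triangle (0,0), (1,0), (1,1) of the
  hexagon is a hued homomorphism. To make it a retraction, keep the other four hexagon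
  vertices fixed; the only outer vertices then adjacent to a fixed vertex without being mapped
  next to it are (-2,-2) and (-2,0), which are redirected to a neighbour of that vertex of the
  same hue.\<close>

lemma hued_retract_automorphism_image:
  assumes retract: "hued_retract UNIV E h W"
    and bij: "bij \<sigma>"
    and adj: "\<And>u v. E (\<sigma> u) (\<sigma> v) \<longleftrightarrow> E u v"
    and hue: "\<And>v. h (\<sigma> v) mod 3 = (h v + k) mod 3"
  shows "hued_retract UNIV E h (\<sigma> ` W)"
proof -
  obtain f where hom: "hued_hom UNIV E h W (induced W E) h f" and fixes_W: "\<forall>w\<in>W. f w = w"
    using retract by (auto simp: hued_retract_def)
  define f' where "f' = \<sigma> \<circ> f \<circ> inv \<sigma>"
  have \<sigma>_inv: "\<sigma> (inv \<sigma> v) = v" for v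
    using bij by (simp add: bij_is_surj surj_f_inv_f)
  have f_in: "f w \<in> W" and f_hue: "h (f w) mod 3 = h w mod 3" for w
    using hom by (auto simp: hued_hom_def)
  have f_adj: "E u v \<Longrightarrow> E (f u) (f v)" for u v
    using hom by (auto simp: hued_hom_def induced_def)
  have f'_in: "f' v \<in> \<sigma> ` W" for v
    by (simp add: f'_def f_in)
  have f'_hue: "h (f' v) mod 3 = h v mod 3" for v
  proof -
    have "h (f' v) mod 3 = (h (f (inv \<sigma> v)) mod 3 + k) mod 3"
      by (simp add: f'_def hue mod_add_left_eq)
    also have "\<dots> = h (\<sigma> (inv \<sigma> v)) mod 3"
      by (simp add: f_hue hue mod_add_left_eq)
    finally show ?thesis by (simp add: \<sigma>_inv)
  qed
  have f'_adj: "E (f' u) (f' v)" if "E u v" for u v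
  proof -
    have "E (inv \<sigma> u) (inv \<sigma> v)"
      using that adj[of "inv \<sigma> u" "inv \<sigma> v"] by (simp add: \<sigma>_inv)
    then show ?thesis by (simp add: f'_def adj f_adj)
  qed
  have "hued_hom UNIV E h (\<sigma> ` W) (induced (\<sigma> ` W) E) h f'"
    by (simp add: hued_hom_def induced_def f'_in f'_hue f'_adj)
  moreover have "\<forall>v\<in>\<sigma> ` W. f' v = v"
    using bij fixes_W by (auto simp: f'_def bij_is_inj)
  ultimately show ?thesis by (auto simp: hued_retract_def)
qed

definition T_steps :: "(int \<times> int) set" where
  "T_steps = {(1,0), (-1,0), (0,1), (0,-1), (1,1), (-1,-1)}"

lemma T_adj_iff_step: "T_adj p q \<longleftrightarrow> q - p \<in> T_steps"
  by (cases p; cases q) (simp add: T_adj_def T_steps_def)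

lemma T_adj_sym:
  assumes "T_adj p q"
  shows "T_adj q p"
proof -
  have "- (q - p) \<in> T_steps"
    using assms unfolding T_adj_iff_step T_steps_def by (elim insertE) simp_all
  then show ?thesis
    by (simp add: T_adj_iff_step)
qed

lemma T_adj_translate: "T_adj (c + p) (c + q) \<longleftrightarrow> T_adj p q"
  by (simp add: T_adj_iff_step)

lemma T_hue_translate: "T_hue (c + p) mod 3 = (T_hue p + T_hue c) mod 3"
  by (simp add: T_hue_def mod_add_eq algebra_simps)

lemma T_hue_adj_neq:
  assumes "T_adj p q"
  shows "T_hue p \<noteq> T_hue q"
proof -
  have "(fst p + snd p) - (fst q + snd q) \<in> {1, -1, 2, -2}"
    using assms unfolding T_adj_iff_step T_steps_def by (cases p; cases q) auto
  then have "\<not> 3 dvd (fst p + snd p) - (fst q + snd q)"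
    by auto
  then show ?thesis
    by (simp add: T_hue_def mod_eq_dvd_iff)
qed

lemma T_hue_range: "T_hue p \<in> {0, 1, 2}"
  unfolding T_hue_def by auto

lemma image_add_iff: "x \<in> (+) (c::'a::ab_group_add) ` A \<longleftrightarrow> x - c \<in> A"
  by (metis add.commute diff_add_cancel add_diff_cancel_left' image_iff)

lemma hexagon_eq_image: "hexagon c = (+) c ` insert 0 T_steps"
  by (rule set_eqI) (simp add: image_add_iff hexagon_def T_adj_iff_step)

lemma hexagon_0: "hexagon 0 = {(0,0), (1,0), (-1,0), (0,1), (0,-1), (1,1), (-1,-1)}"
  by (simp add: hexagon_eq_image T_steps_def zero_prod_def)

definition triangle_vertex :: "int \<Rightarrow> int \<times> int" where
  "triangle_vertex k = (if k = 0 then (0,0) else if k = 1 then (1,0) else (1,1))"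

definition hexagon_retraction :: "int \<times> int \<Rightarrow> int \<times> int" where
  "hexagon_retraction p =
     (if p \<in> hexagon 0 then p
      else if p = (-2,-2) then (0,-1)
      else if p = (-2,0) then (0,1)
      else triangle_vertex (T_hue p))"

lemma triangle_vertex_adj:
  assumes "T_adj p q"
  shows "T_adj (triangle_vertex (T_hue p)) (triangle_vertex (T_hue q))"
  using T_hue_adj_neq[OF assms] T_hue_range[of p] T_hue_range[of q]
  by (auto simp: triangle_vertex_def T_adj_def)

lemma hexagon_retraction_adj_near:
  assumes "p \<in> hexagon 0 \<union> {(-2,-2), (-2,0)}" and "T_adj p q"
  shows "T_adj (hexagon_retraction p) (hexagon_retraction q)"
proof -
  obtain d where d: "d \<in> T_steps" and q: "q = p + d"
    using assms(2) unfolding T_adj_iff_step by (metis add.commute diff_add_cancel)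
  from assms(1) d show ?thesis
    unfolding q hexagon_0 T_steps_def Un_iff insert_iff empty_iff
    by (elim disjE) (simp_all add: hexagon_retraction_def hexagon_0 triangle_vertex_def T_hue_def T_adj_def)
qed

lemma hexagon_retraction_adj:
  assumes "T_adj p q"
  shows "T_adj (hexagon_retraction p) (hexagon_retraction q)"
proof -
  let ?near = "hexagon 0 \<union> {(-2,-2), (-2,0)}"
  consider "p \<in> ?near" | "q \<in> ?near" | "p \<notin> ?near" "q \<notin> ?near" by blast
  then show ?thesis
  proof cases
    case 1
    then show ?thesis using assms by (rule hexagon_retraction_adj_near)
  next
    case 2
    then show ?thesis using T_adj_sym assms hexagon_retraction_adj_near by blast
  next
    case 3
    then show ?thesis
      using triangle_vertex_adj[OF assms] by (simp add: hexagon_retraction_def)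
  qed
qed

lemma hexagon_retraction_in_hexagon: "hexagon_retraction p \<in> hexagon 0"
  using T_hue_range[of p] by (auto simp: hexagon_retraction_def triangle_vertex_def hexagon_0)

lemma hexagon_retraction_hue: "T_hue (hexagon_retraction p) = T_hue p"
  using T_hue_range[of p] by (auto simp: hexagon_retraction_def triangle_vertex_def hexagon_0 T_hue_def)

lemma hued_retract_hexagon_0: "hued_retract UNIV T_adj T_hue (hexagon 0)"
  unfolding hued_retract_def hued_hom_def induced_def
  using hexagon_retraction_in_hexagon hexagon_retraction_adj hexagon_retraction_hue
  by (intro conjI exI[of _ hexagon_retraction]) (auto simp: hexagon_retraction_def)

theorem lemma10:
  fixes c :: "int \<times> int"
  shows "hued_retract UNIV T_adj T_hue (hexagon c)"
proof -
  have "hexagon c = (+) c ` hexagon 0"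
    by (simp add: hexagon_eq_image)
  moreover have "hued_retract UNIV T_adj T_hue ((+) c ` hexagon 0)"
    using hued_retract_hexagon_0
    by (rule hued_retract_automorphism_image[where k = "T_hue c"])
      (simp_all add: bij_betw_add T_adj_translate T_hue_translate)
  ultimately show ?thesis by simp
qed

end
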